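(* On $\mathbb{R}^4$ let $H^1,H^2,H^3$ be constant-coefficient 2-forms with $H^i\wedge H^j=2\delta^{ij}\,\mathrm{vol}$ for a nonvanishing constant 4-form $\mathrm{vol}$, let $M>0$ be a constant, let $a^i$ ($i=1,2,3$) be smooth 1-forms and $\Psi_{ij}$ smooth functions, symmetric and tracefree ($\delta^{ij}\Psi_{ij}=0$). Define the Lagrangian 4-form $$L=\Psi_{ij}\left(M^2H^i\wedge da^j+\tfrac12\,da^i\wedge da^j\right).$$ For an arbitrary smooth vector field $\eta$ and arbitrary smooth functions $\xi^i$, consider the infinitesimal transformation $$\delta a^i=d\xi^i+i_\eta\big(M^2H^i+da^i\big),\qquad \delta\Psi_{ij}=i_\eta d\Psi_{ij}.$$ Then the first-order variation $\delta L$ is an exact 4-form; explicitly $\delta L=d\,(i_\eta L)$. In particular the action $\int L$ is invariant up to boundary terms.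
   Context: $i_\eta$ denotes interior product with the vector field $\eta$. *)

theory Defs
  imports "HOL-Analysis.Analysis" "HOL-Library.Function_Algebras"
begin

text \<open>A (mixed-degree) form is given by its
coefficient function: omega x I is the coefficient of dx^I = dx^(i1) wedge ... wedge dx^(ik)
at the point x, where I = {i1 < ... < ik} is a set of coordinate indices (of type 4).\<close>

type_synonym form = "real^4 \<Rightarrow> 4 set \<Rightarrow> real"

text \<open>Sign of the shuffle: dx^I wedge dx^J = shuffle_sign I J * dx^(I union J) for disjoint I, J.\<close>
definition shuffle_sign :: "4 set \<Rightarrow> 4 set \<Rightarrow> real" where
  "shuffle_sign I J = (-1) ^ card {(i, j). i \<in> I \<and> j \<in> J \<and> j < i}"

definition wedge :: "form \<Rightarrow> form \<Rightarrow> form" where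
  "wedge \<alpha> \<beta> x K = (\<Sum>I\<in>Pow K. shuffle_sign I (K - I) * \<alpha> x I * \<beta> x (K - I))"

definition partial :: "4 \<Rightarrow> (real^4 \<Rightarrow> real) \<Rightarrow> real^4 \<Rightarrow> real" where
  "partial k f x = frechet_derivative f (at x) (axis k 1)"

definition extd :: "form \<Rightarrow> form" where
  "extd \<omega> x K = (\<Sum>k\<in>K. shuffle_sign {k} (K - {k}) * partial k (\<lambda>y. \<omega> y (K - {k})) x)"

definition int_prod :: "(real^4 \<Rightarrow> real^4) \<Rightarrow> form \<Rightarrow> form" where
  "int_prod \<eta> \<omega> x I = (\<Sum>k\<in>- I. shuffle_sign {k} I * (\<eta> x $ k) * \<omega> x (insert k I))"

definition smul :: "(real^4 \<Rightarrow> real) \<Rightarrow> form \<Rightarrow> form" where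
  "smul f \<omega> x I = f x * \<omega> x I"

definition zero_form :: "(real^4 \<Rightarrow> real) \<Rightarrow> form" where
  "zero_form f x I = (if I = {} then f x else 0)"

definition is_kform :: "nat \<Rightarrow> form \<Rightarrow> bool" where
  "is_kform k \<omega> \<longleftrightarrow> (\<forall>x I. card I \<noteq> k \<longrightarrow> \<omega> x I = 0)"

definition constant_form :: "form \<Rightarrow> bool" where
  "constant_form \<omega> \<longleftrightarrow> (\<forall>x y. \<omega> x = \<omega> y)"

fun iter_partial :: "4 list \<Rightarrow> (real^4 \<Rightarrow> real) \<Rightarrow> real^4 \<Rightarrow> real" where
  "iter_partial [] f = f"
| "iter_partial (k # ks) f = partial k (iter_partial ks f)"

definition smooth_fun :: "(real^4 \<Rightarrow> real) \<Rightarrow> bool" where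
  "smooth_fun f \<longleftrightarrow> (\<forall>ks x. iter_partial ks f differentiable (at x))"

definition smooth_form :: "form \<Rightarrow> bool" where
  "smooth_form \<omega> \<longleftrightarrow> (\<forall>I. smooth_fun (\<lambda>x. \<omega> x I))"

definition smooth_vf :: "(real^4 \<Rightarrow> real^4) \<Rightarrow> bool" where
  "smooth_vf \<eta> \<longleftrightarrow> (\<forall>k. smooth_fun (\<lambda>x. \<eta> x $ k))"

definition Lag :: "real \<Rightarrow> (3 \<Rightarrow> form) \<Rightarrow> (3 \<Rightarrow> form) \<Rightarrow> (3 \<Rightarrow> 3 \<Rightarrow> real^4 \<Rightarrow> real) \<Rightarrow> form" where
  "Lag M H a \<Psi> = (\<Sum>i\<in>UNIV. \<Sum>j\<in>UNIV. smul (\<Psi> i j)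
      (smul (\<lambda>_. M\<^sup>2) (wedge (H i) (extd (a j))) + smul (\<lambda>_. 1/2) (wedge (extd (a i)) (extd (a j)))))"

definition first_variation ::
  "real \<Rightarrow> (3 \<Rightarrow> form) \<Rightarrow> (3 \<Rightarrow> form) \<Rightarrow> (3 \<Rightarrow> 3 \<Rightarrow> real^4 \<Rightarrow> real)
    \<Rightarrow> (3 \<Rightarrow> form) \<Rightarrow> (3 \<Rightarrow> 3 \<Rightarrow> real^4 \<Rightarrow> real) \<Rightarrow> form" where
  "first_variation M H a \<Psi> \<delta>a \<delta>\<Psi> x K =
     deriv (\<lambda>\<epsilon>. Lag M H (\<lambda>i. a i + smul (\<lambda>_. \<epsilon>) (\<delta>a i))
                         (\<lambda>i j y. \<Psi> i j y + \<epsilon> * \<delta>\<Psi> i j y) x K) 0"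

end

theory Submission
  imports Defs
begin

text \<open>
  Both sides are 4-forms, so it suffices to compare their top coefficients. As \<open>i\<^sub>\<eta> L\<close> has
  degree 3, \<open>d(i\<^sub>\<eta> L) = \<partial>\<^sub>k(\<eta>\<^sup>k l) = (div \<eta>) l + \<eta>\<^sup>k \<partial>\<^sub>k l\<close>, where \<open>l\<close> is the coefficient of \<open>L\<close>.
  On the other side put \<open>F\<^sup>i = da\<^sup>i\<close> and \<open>G\<^sup>i = M\<^sup>2 H\<^sup>i + F\<^sup>i\<close>. Since \<open>dd\<xi>\<^sup>i = 0\<close> and \<open>G\<^sup>i\<close> is closed
  (\<open>H\<^sup>i\<close> is constant, \<open>dF\<^sup>i = 0\<close> is the Bianchi identity), Cartan's formula gives
  \<open>\<delta>F\<^sup>i = d i\<^sub>\<eta> G\<^sup>i = \<eta>\<^sup>k \<partial>\<^sub>k F\<^sup>i + A\<cdot>G\<^sup>i\<close>, where the Jacobian \<open>A = \<partial>\<eta>\<close> acts on 2-covectors as a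
  derivation. A derivation acts on top-degree covectors by its trace \<open>div \<eta>\<close>, so
  \<open>u \<and> A\<cdot>v + A\<cdot>u \<and> v = (div \<eta>) u \<and> v\<close>. Contracting with the symmetric \<open>\<Psi>\<^sub>i\<^sub>j\<close>, the transport terms
  together with \<open>\<delta>\<Psi>\<^sub>i\<^sub>j = \<eta>\<^sup>k \<partial>\<^sub>k \<Psi>\<^sub>i\<^sub>j\<close> assemble into \<open>\<eta>\<^sup>k \<partial>\<^sub>k l\<close>, and the derivation terms into
  \<open>(div \<eta>)(l + M\<^sup>4/2 \<cdot> \<Psi>\<^sub>i\<^sub>j H\<^sup>i \<and> H\<^sup>j)\<close>; the last summand vanishes because
  \<open>H\<^sup>i \<and> H\<^sup>j\<close> is proportional to \<open>\<delta>\<^sup>i\<^sup>j\<close> and \<open>\<Psi>\<close> is tracefree.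
\<close>

section \<open>Partial derivatives\<close>

lemma differentiable_on_sum [simp, derivative_intros]:
  "finite A \<Longrightarrow> (\<And>i. i \<in> A \<Longrightarrow> f i differentiable_on S) \<Longrightarrow> (\<lambda>x. \<Sum>i\<in>A. f i x) differentiable_on S"
  unfolding differentiable_on_def by (auto intro!: differentiable_sum)

lemma has_derivative_at_UNIV:
  "f differentiable_on UNIV \<Longrightarrow> (f has_derivative frechet_derivative f (at x)) (at x)"
  unfolding differentiable_on_def by (simp add: frechet_derivative_works)

lemma partial_via_has_derivative:
  "(\<And>x. (f has_derivative f' x) (at x)) \<Longrightarrow> partial k f = (\<lambda>x. f' x (axis k 1))"
  unfolding partial_def by (metis frechet_derivative_at)

lemma partial_const [simp]: "partial k (\<lambda>y. c) = (\<lambda>x. 0)"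
  by (rule trans[OF partial_via_has_derivative[where f'="\<lambda>x h. 0"]]) simp_all

lemma partial_add [simp]:
  "f differentiable_on UNIV \<Longrightarrow> g differentiable_on UNIV \<Longrightarrow>
    partial k (\<lambda>y. f y + g y) = (\<lambda>x. partial k f x + partial k g x)"
  unfolding partial_def[of k f] partial_def[of k g]
  by (intro partial_via_has_derivative has_derivative_add has_derivative_at_UNIV)

lemma partial_diff [simp]:
  "f differentiable_on UNIV \<Longrightarrow> g differentiable_on UNIV \<Longrightarrow>
    partial k (\<lambda>y. f y - g y) = (\<lambda>x. partial k f x - partial k g x)"
  unfolding partial_def[of k f] partial_def[of k g]
  by (intro partial_via_has_derivative has_derivative_diff has_derivative_at_UNIV)

lemma partial_mult [simp]:
  "f differentiable_on UNIV \<Longrightarrow> g differentiable_on UNIV \<Longrightarrow>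
    partial k (\<lambda>y. f y * g y) = (\<lambda>x. partial k f x * g x + f x * partial k g x)"
  unfolding partial_def[of k f] partial_def[of k g]
  by (rule trans[OF partial_via_has_derivative[where
        f'="\<lambda>x h. f x * frechet_derivative g (at x) h + frechet_derivative f (at x) h * g x"]])
    (auto intro!: has_derivative_mult has_derivative_at_UNIV)

lemma partial_sum [simp]:
  "(\<And>i. i \<in> A \<Longrightarrow> f i differentiable_on UNIV) \<Longrightarrow>
    partial k (\<lambda>y. \<Sum>i\<in>A. f i y) = (\<lambda>x. \<Sum>i\<in>A. partial k (f i) x)"
  by (rule trans[OF partial_via_has_derivative[where
        f'="\<lambda>x h. \<Sum>i\<in>A. frechet_derivative (f i) (at x) h"]])
    (auto intro!: has_derivative_sum has_derivative_at_UNIV simp: partial_def)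

lemma differentiable_on_divide_const [simp, derivative_intros]:
  fixes f :: "'a::real_normed_vector \<Rightarrow> real"
  shows "f differentiable_on S \<Longrightarrow> (\<lambda>y. f y / c) differentiable_on S"
  unfolding divide_inverse by simp

lemma partial_divide_const [simp]:
  "f differentiable_on UNIV \<Longrightarrow> partial k (\<lambda>y. f y / c) = (\<lambda>x. partial k f x / c)"
  unfolding divide_inverse by simp

lemma differentiable_on_shift: "f differentiable_on UNIV \<Longrightarrow> (\<lambda>y. f (y + c)) differentiable_on UNIV"
  by (rule differentiable_on_compose) (auto intro: differentiable_on_subset)

lemma partial_shift:
  "f differentiable_on UNIV \<Longrightarrow> partial k (\<lambda>y. f (y + c)) = (\<lambda>x. partial k f (x + c))"
  unfolding partial_def[of k f]
  by (rule partial_via_has_derivative[where f'="\<lambda>x. frechet_derivative f (at (x + c))"],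
      rule has_derivative_compose[of "\<lambda>y. y + c" "\<lambda>h. h", simplified])
    (auto intro: has_derivative_at_UNIV derivative_eq_intros)

lemma mvt_partial:
  fixes f :: "real^4 \<Rightarrow> real"
  assumes f: "f differentiable_on UNIV" and "0 < h"
  obtains t where "0 < t" "t < h" "f (y + h *\<^sub>R axis k 1) - f y = h * partial k f (y + t *\<^sub>R axis k 1)"
proof -
  let ?v = "axis k 1 :: real^4"
  have der: "((\<lambda>t. f (y + t *\<^sub>R ?v)) has_real_derivative partial k f (y + t *\<^sub>R ?v)) (at t)" for t
  proof -
    let ?f' = "frechet_derivative f (at (y + t *\<^sub>R ?v))"
    have "((\<lambda>t. y + t *\<^sub>R ?v) has_derivative (\<lambda>s. s *\<^sub>R ?v)) (at t)"
      by (auto intro!: derivative_eq_intros)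
    from has_derivative_compose[OF this has_derivative_at_UNIV[OF f]]
    have hd: "((\<lambda>t. f (y + t *\<^sub>R ?v)) has_derivative (\<lambda>s. ?f' (s *\<^sub>R ?v))) (at t)" .
    have "linear ?f'"
      using has_derivative_at_UNIV[OF f] has_derivative_linear by blast
    then show ?thesis
      by (intro has_derivative_imp_has_field_derivative[OF hd]) (simp add: partial_def linear_scale)
  qed
  have "\<exists>t. 0 < t \<and> t < h \<and> f (y + h *\<^sub>R ?v) - f (y + 0 *\<^sub>R ?v) = (h - 0) * partial k f (y + t *\<^sub>R ?v)"
    by (rule MVT2[OF \<open>0 < h\<close> der])
  then show ?thesis using that by auto
qed

lemma second_difference_mvt:
  fixes f :: "real^4 \<Rightarrow> real"
  assumes f: "f differentiable_on UNIV" and fp: "partial p f differentiable_on UNIV" and "0 < h"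
  obtains t s where "0 < t" "t < h" "0 < s" "s < h"
    "f (x + h *\<^sub>R axis p 1 + h *\<^sub>R axis q 1) - f (x + h *\<^sub>R axis p 1) - f (x + h *\<^sub>R axis q 1) + f x
       = h * h * partial q (partial p f) (x + t *\<^sub>R axis p 1 + s *\<^sub>R axis q 1)"
proof -
  define \<phi> where "\<phi> y = f (y + h *\<^sub>R axis q 1) - f y" for y
  have "\<phi> differentiable_on UNIV"
    unfolding \<phi>_def using differentiable_on_shift[OF f] f by (rule differentiable_on_diff)
  then obtain t where t: "0 < t" "t < h"
      "\<phi> (x + h *\<^sub>R axis p 1) - \<phi> x = h * partial p \<phi> (x + t *\<^sub>R axis p 1)"
    using mvt_partial \<open>0 < h\<close> by metis
  obtain s where s: "0 < s" "s < h"
      "partial p f (x + t *\<^sub>R axis p 1 + h *\<^sub>R axis q 1) - partial p f (x + t *\<^sub>R axis p 1)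
         = h * partial q (partial p f) (x + t *\<^sub>R axis p 1 + s *\<^sub>R axis q 1)"
    using mvt_partial[OF fp \<open>0 < h\<close>] by metis
  have "partial p \<phi> = (\<lambda>y. partial p f (y + h *\<^sub>R axis q 1) - partial p f y)"
    unfolding \<phi>_def partial_diff[OF differentiable_on_shift[OF f] f] partial_shift[OF f] ..
  then have "\<phi> (x + h *\<^sub>R axis p 1) - \<phi> x = h * h * partial q (partial p f) (x + t *\<^sub>R axis p 1 + s *\<^sub>R axis q 1)"
    by (simp only: t(3) s(3) mult.assoc)
  moreover have "\<phi> (x + h *\<^sub>R axis p 1) - \<phi> x
      = f (x + h *\<^sub>R axis p 1 + h *\<^sub>R axis q 1) - f (x + h *\<^sub>R axis p 1) - f (x + h *\<^sub>R axis q 1) + f x"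
    unfolding \<phi>_def by simp
  ultimately show ?thesis using that[OF t(1,2) s(1,2)] by simp
qed

text \<open>Schwarz's theorem: both mixed partials are limits of the same second difference quotient.\<close>

lemma partial_commute:
  fixes f :: "real^4 \<Rightarrow> real"
  assumes f: "f differentiable_on UNIV"
    and fp: "partial p f differentiable_on UNIV" and fq: "partial q f differentiable_on UNIV"
    and A: "continuous (at x) (partial q (partial p f))" and B: "continuous (at x) (partial p (partial q f))"
  shows "partial p (partial q f) x = partial q (partial p f) x"
proof -
  let ?A = "partial q (partial p f)" and ?B = "partial p (partial q f)"
  have close: "dist (x + t *\<^sub>R axis i 1 + s *\<^sub>R axis j 1) x < 2 * h"
    if "0 < t" "t < h" "0 < s" "s < h" for t s h and i j :: 4
  proof -
    have "dist (x + t *\<^sub>R axis i 1 + s *\<^sub>R axis j 1) x = norm (t *\<^sub>R axis i (1::real) + s *\<^sub>R axis j 1)"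
      by (simp add: dist_norm)
    also have "\<dots> \<le> norm (t *\<^sub>R axis i (1::real)) + norm (s *\<^sub>R axis j (1::real))"
      by (rule norm_triangle_ineq)
    also have "\<dots> < 2 * h" using that by simp
    finally show ?thesis .
  qed
  have "\<bar>?B x - ?A x\<bar> < e" if "e > 0" for e
  proof -
    obtain d1 where d1: "d1 > 0" "\<And>z. dist z x < d1 \<Longrightarrow> \<bar>?A z - ?A x\<bar> < e/2"
      using A \<open>e > 0\<close> unfolding continuous_at_eps_delta dist_real_def by (meson half_gt_zero)
    obtain d2 where d2: "d2 > 0" "\<And>z. dist z x < d2 \<Longrightarrow> \<bar>?B z - ?B x\<bar> < e/2"
      using B \<open>e > 0\<close> unfolding continuous_at_eps_delta dist_real_def by (meson half_gt_zero)
    define h where "h = min d1 d2 / 2"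
    have "0 < h" using d1 d2 by (simp add: h_def)
    obtain t s where ts: "0 < t" "t < h" "0 < s" "s < h"
      "f (x + h *\<^sub>R axis p 1 + h *\<^sub>R axis q 1) - f (x + h *\<^sub>R axis p 1) - f (x + h *\<^sub>R axis q 1) + f x
         = h * h * ?A (x + t *\<^sub>R axis p 1 + s *\<^sub>R axis q 1)"
      using second_difference_mvt[OF f fp \<open>0 < h\<close>] by blast
    obtain t' s' where ts': "0 < t'" "t' < h" "0 < s'" "s' < h"
      "f (x + h *\<^sub>R axis q 1 + h *\<^sub>R axis p 1) - f (x + h *\<^sub>R axis q 1) - f (x + h *\<^sub>R axis p 1) + f x
         = h * h * ?B (x + t' *\<^sub>R axis q 1 + s' *\<^sub>R axis p 1)"
      using second_difference_mvt[OF f fq \<open>0 < h\<close>] by blast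
    have same: "?A (x + t *\<^sub>R axis p 1 + s *\<^sub>R axis q 1) = ?B (x + t' *\<^sub>R axis q 1 + s' *\<^sub>R axis p 1)"
      using ts(5) ts'(5) \<open>0 < h\<close> by (simp add: algebra_simps)
    have "2 * h \<le> d1" "2 * h \<le> d2" by (simp_all add: h_def)
    then have "\<bar>?A (x + t *\<^sub>R axis p 1 + s *\<^sub>R axis q 1) - ?A x\<bar> < e/2"
        "\<bar>?B (x + t' *\<^sub>R axis q 1 + s' *\<^sub>R axis p 1) - ?B x\<bar> < e/2"
      using d1(2) d2(2) close[OF ts(1-4)] close[OF ts'(1-4)] by (meson less_le_trans)+
    with same show ?thesis by linarith
  qed
  then show ?thesis by (metis less_irrefl zero_less_abs_iff right_minus_eq)
qed

lemma iter_partial_append: "iter_partial ks (partial k f) = iter_partial (ks @ [k]) f"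
  by (induction ks) auto

lemma smooth_fun_partial: "smooth_fun f \<Longrightarrow> smooth_fun (partial k f)"
  unfolding smooth_fun_def by (metis iter_partial_append)

lemma smooth_fun_differentiable: "smooth_fun f \<Longrightarrow> f differentiable_on UNIV"
  unfolding smooth_fun_def differentiable_on_def by (metis iter_partial.simps(1))

lemma smooth_fun_partial_differentiable: "smooth_fun f \<Longrightarrow> partial k f differentiable_on UNIV"
  by (simp add: smooth_fun_differentiable smooth_fun_partial)

lemma smooth_fun_continuous: "smooth_fun f \<Longrightarrow> continuous (at x) f"
  using smooth_fun_differentiable differentiable_imp_continuous_within
  unfolding differentiable_on_def by blast

lemma smooth_fun_zero: "smooth_fun (\<lambda>y. 0)"
proof -
  have "iter_partial ks (\<lambda>y::real^4. 0) = (\<lambda>y. 0)" for ks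
    by (induction ks) auto
  then show ?thesis unfolding smooth_fun_def by simp
qed

lemma smooth_partial_commute: "smooth_fun f \<Longrightarrow> partial p (partial q f) x = partial q (partial p f) x"
  by (rule partial_commute)
    (simp_all add: smooth_fun_differentiable smooth_fun_partial smooth_fun_continuous)

section \<open>Covectors on \<open>\<real>\<^sup>4\<close> and the top-degree pairing\<close>

lemma Rep_bit0_4: "Rep_bit0 (1::4) = 1" "Rep_bit0 (2::4) = 2" "Rep_bit0 (3::4) = 3" "Rep_bit0 (4::4) = 0"
  by (simp_all add: bit0.Rep_numeral bit0.Rep_1)

lemma numerals_4_distinct:
  "(4::4) \<noteq> 1" "(4::4) \<noteq> 2" "(4::4) \<noteq> 3" "(1::4) \<noteq> 4" "(1::4) \<noteq> 2" "(1::4) \<noteq> 3"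
  "(2::4) \<noteq> 4" "(2::4) \<noteq> 1" "(2::4) \<noteq> 3" "(3::4) \<noteq> 4" "(3::4) \<noteq> 1" "(3::4) \<noteq> 2"
  by (simp_all only: Rep_bit0_inject[symmetric] Rep_bit0_4)

lemma sum_UNIV_4: "(\<Sum>c\<in>UNIV. f c) = f (1::4) + f 2 + f 3 + f 4"
  unfolding UNIV_4 by (simp add: numerals_4_distinct add.assoc)

lemma shuffle_sign_prod: "shuffle_sign I J = (\<Prod>i\<in>I. \<Prod>j\<in>J. if j < i then -1 else 1)"
proof -
  have "(\<Prod>i\<in>I. \<Prod>j\<in>J. if j < i then -1 else (1::real)) = (\<Prod>p\<in>I \<times> J. if snd p < fst p then -1 else 1)"
    by (simp add: prod.cartesian_product case_prod_beta)
  also have "\<dots> = (-1) ^ card ((I \<times> J) \<inter> {p. snd p < fst p})"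
    by (simp add: prod.If_cases)
  also have "(I \<times> J) \<inter> {p. snd p < fst p} = {(i, j). i \<in> I \<and> j \<in> J \<and> j < i}" by auto
  finally show ?thesis unfolding shuffle_sign_def by simp
qed

lemma shuffle_sign_singletons: "shuffle_sign {p} {q} = (if q < p then -1 else 1)"
  by (simp add: shuffle_sign_prod)

lemma shuffle_sign_empty_right [simp]: "shuffle_sign I {} = 1"
  by (simp add: shuffle_sign_def)

lemma shuffle_sign_square [simp]: "shuffle_sign I J * shuffle_sign I J = 1"
  unfolding shuffle_sign_def by (simp flip: power_add add: power_even_eq[symmetric])

lemma shuffle_sign_swap: "p \<noteq> q \<Longrightarrow> shuffle_sign {q} {p} = - shuffle_sign {p} {q}"
  by (auto simp: shuffle_sign_singletons neq_iff)

definition is_kcovector :: "nat \<Rightarrow> (4 set \<Rightarrow> real) \<Rightarrow> bool" where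
  "is_kcovector k u \<longleftrightarrow> (\<forall>I. card I \<noteq> k \<longrightarrow> u I = 0)"

lemma is_kform_iff_kcovector: "is_kform k \<omega> \<longleftrightarrow> (\<forall>x. is_kcovector k (\<omega> x))"
  by (simp add: is_kform_def is_kcovector_def)

lemma is_2covector_degenerate: "is_kcovector 2 u \<Longrightarrow> u {p} = 0" "is_kcovector 2 u \<Longrightarrow> u {p, p} = 0"
  by (auto simp: is_kcovector_def)

definition top_pairing :: "(4 set \<Rightarrow> real) \<Rightarrow> (4 set \<Rightarrow> real) \<Rightarrow> real" where
  "top_pairing u v = (\<Sum>I\<in>Pow UNIV. shuffle_sign I (UNIV - I) * u I * v (UNIV - I))"

lemma wedge_UNIV: "wedge \<alpha> \<beta> x UNIV = top_pairing (\<alpha> x) (\<beta> x)"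
  by (simp add: wedge_def top_pairing_def)

lemma card_2_subsets_4: "{I::4 set. card I = 2} = {{4,1}, {4,2}, {4,3}, {1,2}, {1,3}, {2,3}}"
proof (rule set_eqI, rule iffI)
  fix I :: "4 set" assume "I \<in> {I. card I = 2}"
  then obtain x y where "I = {x, y}" "x \<noteq> y" by (auto simp: card_2_iff)
  then show "I \<in> {{4,1}, {4,2}, {4,3}, {1,2}, {1,3}, {2,3}}"
    using exhaust_4[of x] exhaust_4[of y]
    by (elim disjE) (simp_all add: numerals_4_distinct insert_commute)
qed (auto simp: numerals_4_distinct)

lemma top_pairing_2covector:
  assumes "is_kcovector 2 u"
  shows "top_pairing u v = u {4,1} * v {2,3} - u {4,2} * v {1,3} + u {4,3} * v {1,2}
                         + u {1,2} * v {4,3} - u {1,3} * v {4,2} + u {2,3} * v {4,1}"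
proof -
  have signs: "shuffle_sign {4::4,1} {2,3} = 1" "shuffle_sign {4::4,2} {1,3} = -1"
    "shuffle_sign {4::4,3} {1,2} = 1" "shuffle_sign {1::4,2} {4,3} = 1"
    "shuffle_sign {1::4,3} {4,2} = -1" "shuffle_sign {2::4,3} {4,1} = 1"
    by (simp_all add: shuffle_sign_prod less_bit0_def Rep_bit0_4 numerals_4_distinct)
  have distinct: "{4::4,1} \<notin> {{4,2}, {4,3}, {1,2}, {1,3}, {2,3}}" "{4::4,2} \<notin> {{4,3}, {1,2}, {1,3}, {2,3}}"
    "{4::4,3} \<notin> {{1,2}, {1,3}, {2,3}}" "{1::4,2} \<notin> {{1,3}, {2,3}}" "{1::4,3} \<notin> {{2,3}}"
    by (simp_all add: doubleton_eq_iff numerals_4_distinct)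
  have complements: "UNIV - {4,1} = {2::4,3}" "UNIV - {4,2} = {1::4,3}" "UNIV - {4,3} = {1::4,2}"
      "UNIV - {1,2} = {4::4,3}" "UNIV - {1,3} = {4::4,2}" "UNIV - {2,3} = {4::4,1}"
    unfolding UNIV_4 by (simp_all add: numerals_4_distinct insert_Diff_if insert_commute)
  have "top_pairing u v = (\<Sum>I\<in>{I. card I = 2}. shuffle_sign I (UNIV - I) * u I * v (UNIV - I))"
    unfolding top_pairing_def using assms unfolding is_kcovector_def
    by (intro sum.mono_neutral_right) auto
  also have "\<dots> = u {4,1} * v {2,3} - u {4,2} * v {1,3} + u {4,3} * v {1,2}
                   + u {1,2} * v {4,3} - u {1,3} * v {4,2} + u {2,3} * v {4,1}"
    unfolding card_2_subsets_4
    by (simp only: sum.insert finite_insert finite.emptyI distinct empty_iff not_False_eq_True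
        sum.empty signs complements)
  finally show ?thesis .
qed

lemma top_pairing_sym: "is_kcovector 2 u \<Longrightarrow> is_kcovector 2 v \<Longrightarrow> top_pairing u v = top_pairing v u"
  by (simp only: top_pairing_2covector) (simp add: algebra_simps)

lemma top_pairing_add_left: "top_pairing (\<lambda>I. u I + v I) w = top_pairing u w + top_pairing v w"
  by (simp add: top_pairing_def algebra_simps sum.distrib)

lemma top_pairing_add_right: "top_pairing w (\<lambda>I. u I + v I) = top_pairing w u + top_pairing w v"
  by (simp add: top_pairing_def algebra_simps sum.distrib)

lemma top_pairing_scale_left: "top_pairing (\<lambda>I. c * u I) w = c * top_pairing u w"
  by (simp add: top_pairing_def algebra_simps sum_distrib_left)

lemma top_pairing_scale_right: "top_pairing w (\<lambda>I. c * u I) = c * top_pairing w u"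
  by (simp add: top_pairing_def algebra_simps sum_distrib_left)

lemma top_pairing_sum_left: "top_pairing (\<lambda>I. \<Sum>k\<in>A. f k I) w = (\<Sum>k\<in>A. top_pairing (f k) w)"
  unfolding top_pairing_def sum_distrib_left sum_distrib_right by (rule sum.swap)

lemma top_pairing_sum_right: "top_pairing w (\<lambda>I. \<Sum>k\<in>A. f k I) = (\<Sum>k\<in>A. top_pairing w (f k))"
  unfolding top_pairing_def sum_distrib_left by (rule sum.swap)

lemmas top_pairing_bilinear = top_pairing_add_left top_pairing_add_right
  top_pairing_scale_left top_pairing_scale_right top_pairing_sum_left top_pairing_sum_right

text \<open>The entries \<open>G\<^sub>p\<^sub>q\<close> of the antisymmetric matrix of a 2-covector \<open>G = \<Sum>\<^sub>p\<^sub><\<^sub>q G\<^sub>p\<^sub>q dx\<^sup>p \<and> dx\<^sup>q\<close>.\<close>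

definition skew_entry :: "(4 set \<Rightarrow> real) \<Rightarrow> 4 \<Rightarrow> 4 \<Rightarrow> real" where
  "skew_entry u p q = shuffle_sign {p} {q} * u {p, q}"

lemma skew_entry_antisym:
  assumes "is_kcovector 2 u"
  shows "skew_entry u p q = - skew_entry u q p"
proof (cases "p = q")
  case True
  then show ?thesis using assms by (simp add: skew_entry_def is_2covector_degenerate)
next
  case False
  then show ?thesis by (simp add: skew_entry_def shuffle_sign_swap[OF False] insert_commute)
qed

text \<open>A matrix \<open>A\<close> acts on 2-covectors as a derivation, \<open>(A\<cdot>u)\<^sub>p\<^sub>q = A\<^sub>p\<^sub>c u\<^sub>c\<^sub>q + A\<^sub>q\<^sub>c u\<^sub>p\<^sub>c\<close>;
  on top-degree covectors the induced derivation is multiplication by the trace.\<close>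

lemma top_pairing_derivation:
  fixes u u' v v' :: "4 set \<Rightarrow> real" and A :: "4 \<Rightarrow> 4 \<Rightarrow> real"
  assumes u: "is_kcovector 2 u" "is_kcovector 2 u'" and "is_kcovector 2 v"
    and v: "\<And>p q. p \<noteq> q \<Longrightarrow> v {p,q} = shuffle_sign {p} {q} * (\<Sum>c\<in>UNIV. A p c * skew_entry u c q + A q c * skew_entry u p c)"
    and v': "\<And>p q. p \<noteq> q \<Longrightarrow> v' {p,q} = shuffle_sign {p} {q} * (\<Sum>c\<in>UNIV. A p c * skew_entry u' c q + A q c * skew_entry u' p c)"
  shows "top_pairing u v' + top_pairing v u' = (\<Sum>c\<in>UNIV. A c c) * top_pairing u u'"
proof -
  have signs: "shuffle_sign {4::4} {1} = 1" "shuffle_sign {4::4} {2} = 1" "shuffle_sign {4::4} {3} = 1"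
    "shuffle_sign {1::4} {4} = -1" "shuffle_sign {1::4} {2} = 1" "shuffle_sign {1::4} {3} = 1"
    "shuffle_sign {2::4} {4} = -1" "shuffle_sign {2::4} {1} = -1" "shuffle_sign {2::4} {3} = 1"
    "shuffle_sign {3::4} {4} = -1" "shuffle_sign {3::4} {1} = -1" "shuffle_sign {3::4} {2} = -1"
    by (simp_all add: shuffle_sign_singletons less_bit0_def Rep_bit0_4)
  have sets: "{1::4,4} = {4,1}" "{2::4,4} = {4,2}" "{3::4,4} = {4,3}"
    "{2::4,1} = {1,2}" "{3::4,1} = {1,3}" "{3::4,2} = {2,3}"
    by (simp_all add: insert_commute)
  note S = sum_UNIV_4 skew_entry_def signs sets is_2covector_degenerate[OF u(1)] is_2covector_degenerate[OF u(2)]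
  note N = numerals_4_distinct
  note e = v[OF N(1), simplified S] v[OF N(2), simplified S] v[OF N(3), simplified S]
    v[OF N(5), simplified S] v[OF N(6), simplified S] v[OF N(9), simplified S]
  note e' = v'[OF N(1), simplified S] v'[OF N(2), simplified S] v'[OF N(3), simplified S]
    v'[OF N(5), simplified S] v'[OF N(6), simplified S] v'[OF N(9), simplified S]
  show ?thesis
    unfolding top_pairing_2covector[OF u(1)] top_pairing_2covector[OF \<open>is_kcovector 2 v\<close>] e e' sum_UNIV_4
    by algebra
qed

section \<open>Differential forms\<close>

declare smul_def [simp]

lemma sum_fun_apply: "(\<Sum>i\<in>A. f i) x = (\<Sum>i\<in>A. f i x)"
  by (induction A rule: infinite_finite_induct) auto

lemma card_eq_4_iff: "card (K :: 4 set) = 4 \<longleftrightarrow> K = UNIV"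
  using card_subset_eq[of "UNIV :: 4 set" K] by auto

lemma kform_wedge: "is_kform p \<alpha> \<Longrightarrow> is_kform q \<beta> \<Longrightarrow> is_kform (p + q) (wedge \<alpha> \<beta>)"
  unfolding is_kform_def wedge_def
proof (intro allI impI sum.neutral ballI)
  fix x K I assume \<alpha>: "\<forall>x I. card I \<noteq> p \<longrightarrow> \<alpha> x I = 0" and \<beta>: "\<forall>x I. card I \<noteq> q \<longrightarrow> \<beta> x I = 0"
    and "card (K :: 4 set) \<noteq> p + q" and "I \<in> Pow K"
  then have "card I \<noteq> p \<or> card (K - I) \<noteq> q"
    by (auto simp: card_Diff_subset card_mono)
  then show "shuffle_sign I (K - I) * \<alpha> x I * \<beta> x (K - I) = 0"
    using \<alpha> \<beta> by auto
qed

lemma kform_extd: "is_kform p \<omega> \<Longrightarrow> is_kform (Suc p) (extd \<omega>)"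
  unfolding is_kform_def extd_def
proof (intro allI impI sum.neutral ballI)
  fix x K k assume \<omega>: "\<forall>x I. card I \<noteq> p \<longrightarrow> \<omega> x I = 0" and "card (K :: 4 set) \<noteq> Suc p" and "k \<in> K"
  then have "card (K - {k}) \<noteq> p"
    by (metis card.remove finite)
  then show "shuffle_sign {k} (K - {k}) * partial k (\<lambda>y. \<omega> y (K - {k})) x = 0"
    using \<omega> by simp
qed

lemma kform_int_prod: "is_kform (Suc p) \<omega> \<Longrightarrow> is_kform p (int_prod \<eta> \<omega>)"
  unfolding is_kform_def int_prod_def by (auto intro!: sum.neutral)

lemma kform_add: "is_kform p \<omega> \<Longrightarrow> is_kform p \<theta> \<Longrightarrow> is_kform p (\<omega> + \<theta>)"
  unfolding is_kform_def by simp

lemma kform_smul: "is_kform p \<omega> \<Longrightarrow> is_kform p (smul f \<omega>)"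
  unfolding is_kform_def by simp

lemma kform_sum: "(\<And>i. i \<in> A \<Longrightarrow> is_kform p (f i)) \<Longrightarrow> is_kform p (\<Sum>i\<in>A. f i)"
  unfolding is_kform_def sum_fun_apply by auto

lemma kform_zero_form: "is_kform 0 (zero_form f)"
  unfolding is_kform_def zero_form_def by auto

lemma zero_form_component: "(\<lambda>y. zero_form f y S) = (if S = {} then f else (\<lambda>y. 0))"
  by (auto simp: zero_form_def)

lemma extd_zero_form_singleton: "extd (zero_form f) x {k} = partial k f x"
  by (simp add: extd_def zero_form_component)

lemma int_prod_empty: "int_prod \<eta> \<omega> x {} = (\<Sum>k\<in>UNIV. \<eta> x $ k * \<omega> x {k})"
  by (simp add: int_prod_def)

lemma extd_pair:
  assumes "is_kform 1 \<omega>"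
  shows "extd \<omega> y {c, q} = shuffle_sign {c} {q} * (partial c (\<lambda>y. \<omega> y {q}) y - partial q (\<lambda>y. \<omega> y {c}) y)"
proof (cases "c = q")
  case True
  have "(\<lambda>y. \<omega> y {}) = (\<lambda>y. 0)" using assms unfolding is_kform_def by auto
  then show ?thesis using True by (simp add: extd_def)
next
  case False
  then have "{c, q} - {c} = {q}" "{c, q} - {q} = {c}" by auto
  then show ?thesis
    using False by (simp add: extd_def shuffle_sign_swap[OF False] algebra_simps)
qed

lemma int_prod_singleton:
  assumes "is_kform 2 \<omega>"
  shows "int_prod \<eta> \<omega> x {q} = (\<Sum>c\<in>UNIV. \<eta> x $ c * skew_entry (\<omega> x) c q)"
proof -
  have "(\<Sum>c\<in>UNIV. \<eta> x $ c * skew_entry (\<omega> x) c q)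
      = \<eta> x $ q * skew_entry (\<omega> x) q q + (\<Sum>c\<in>UNIV - {q}. \<eta> x $ c * skew_entry (\<omega> x) c q)"
    by (rule sum.remove) auto
  also have "\<dots> = (\<Sum>c\<in>- {q}. shuffle_sign {c} {q} * \<eta> x $ c * \<omega> x (insert c {q}))"
    using assms by (simp add: is_kform_def skew_entry_def Compl_eq_Diff_UNIV algebra_simps)
  finally show ?thesis by (simp add: int_prod_def)
qed

lemma extd_int_prod_UNIV:
  assumes \<eta>: "\<And>k. (\<lambda>y. \<eta> y $ k) differentiable_on UNIV" and \<omega>: "(\<lambda>y. \<omega> y UNIV) differentiable_on UNIV"
  shows "extd (int_prod \<eta> \<omega>) x UNIV
    = (\<Sum>k\<in>UNIV. partial k (\<lambda>y. \<eta> y $ k) x) * \<omega> x UNIV + (\<Sum>k\<in>UNIV. \<eta> x $ k * partial k (\<lambda>y. \<omega> y UNIV) x)"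
proof -
  have "- (UNIV - {k}) = {k}" "insert k (UNIV - {k}) = UNIV" for k :: 4 by auto
  then have "partial k (\<lambda>y. int_prod \<eta> \<omega> y (UNIV - {k})) x
      = shuffle_sign {k} (UNIV - {k}) * partial k (\<lambda>y. \<eta> y $ k * \<omega> y UNIV) x" for k
    using \<eta> \<omega> by (simp add: int_prod_def mult.assoc)
  then show ?thesis
    using \<eta> \<omega> by (simp add: extd_def mult.assoc[symmetric] sum.distrib sum_distrib_right)
qed

lemma extd_add:
  assumes "\<And>J. (\<lambda>y. \<omega> y J) differentiable_on UNIV" "\<And>J. (\<lambda>y. \<theta> y J) differentiable_on UNIV"
  shows "extd (\<omega> + \<theta>) = extd \<omega> + extd \<theta>"
  using assms by (intro ext) (simp add: extd_def algebra_simps sum.distrib)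

lemma extd_scale:
  assumes "\<And>J. (\<lambda>y. \<omega> y J) differentiable_on UNIV"
  shows "extd (smul (\<lambda>_. c) \<omega>) = smul (\<lambda>_. c) (extd \<omega>)"
  using assms by (intro ext) (simp add: extd_def algebra_simps sum_distrib_left)

lemma extd_differentiable: "smooth_form \<omega> \<Longrightarrow> (\<lambda>y. extd \<omega> y J) differentiable_on UNIV"
  unfolding extd_def smooth_form_def by (auto intro!: derivative_intros smooth_fun_partial_differentiable)

lemma int_prod_differentiable:
  "(\<And>k. (\<lambda>y. \<eta> y $ k) differentiable_on UNIV) \<Longrightarrow> (\<And>S. (\<lambda>y. \<omega> y S) differentiable_on UNIV)
    \<Longrightarrow> (\<lambda>y. int_prod \<eta> \<omega> y J) differentiable_on UNIV"
  unfolding int_prod_def by (auto intro!: derivative_intros)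

lemma smooth_form_zero_form: "smooth_fun f \<Longrightarrow> smooth_form (zero_form f)"
  by (simp add: smooth_form_def zero_form_component smooth_fun_zero)

lemma smooth_vf_differentiable: "smooth_vf \<eta> \<Longrightarrow> (\<lambda>y. \<eta> y $ k) differentiable_on UNIV"
  by (simp add: smooth_vf_def smooth_fun_differentiable)

lemma extd_extd_zero_form:
  assumes "smooth_fun f"
  shows "extd (extd (zero_form f)) x K = 0"
proof (cases "card K = 2")
  case False
  have "is_kform 2 (extd (extd (zero_form f)))"
    using kform_extd[OF kform_extd[OF kform_zero_form]] by (simp add: numeral_2_eq_2)
  then show ?thesis using False by (simp add: is_kform_def)
next
  case True
  then obtain p q where K: "K = {p, q}" by (auto simp: card_2_iff)
  have "is_kform 1 (extd (zero_form f))" using kform_extd[OF kform_zero_form] by simp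
  moreover have "(\<lambda>y. extd (zero_form f) y {k}) = partial k f" for k
    by (simp add: extd_zero_form_singleton fun_eq_iff)
  ultimately show ?thesis
    unfolding K using extd_pair smooth_partial_commute[OF assms] by simp
qed

lemma skew_entry_extd:
  assumes "is_kform 1 a"
  shows "skew_entry (extd a y) c r = partial c (\<lambda>y. a y {r}) y - partial r (\<lambda>y. a y {c}) y"
  by (simp add: extd_pair[OF assms] skew_entry_def mult.assoc[symmetric])

lemma bianchi_identity:
  assumes a: "is_kform 1 a" and sa: "smooth_form a"
  shows "partial p (\<lambda>y. skew_entry (extd a y) c q) x - partial q (\<lambda>y. skew_entry (extd a y) c p) x
       = skew_entry (\<lambda>S. partial c (\<lambda>y. extd a y S) x) p q"
proof -
  define \<alpha> where "\<alpha> c y = a y {c}" for c y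
  have s\<alpha>: "smooth_fun (\<alpha> c)" for c
    using sa unfolding smooth_form_def \<alpha>_def by simp
  have d\<alpha>: "partial c (\<alpha> r) differentiable_on UNIV" for c r
    by (rule smooth_fun_partial_differentiable[OF s\<alpha>])
  have comm: "partial r (partial s (\<alpha> t)) x = partial s (partial r (\<alpha> t)) x" for r s t
    by (rule smooth_partial_commute[OF s\<alpha>])
  have F: "(\<lambda>y. skew_entry (extd a y) c r) = (\<lambda>y. partial c (\<alpha> r) y - partial r (\<alpha> c) y)" for c r
    unfolding \<alpha>_def by (simp add: skew_entry_extd[OF a])
  have "skew_entry (\<lambda>S. partial c (\<lambda>y. extd a y S) x) p q = partial c (\<lambda>y. skew_entry (extd a y) p q) x"
    using extd_differentiable[OF sa] by (simp add: skew_entry_def)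
  then show ?thesis
    unfolding F using d\<alpha> comm[of p c q] comm[of q c p] comm[of p q c] by simp
qed

text \<open>Cartan's formula \<open>d i\<^sub>\<eta> G = L\<^sub>\<eta> G\<close> for the closed 2-form \<open>G = h + da\<close>, in components.\<close>

lemma extd_int_prod_pair:
  fixes h :: "4 set \<Rightarrow> real" and a :: form
  assumes a: "is_kform 1 a" and sa: "smooth_form a" and \<eta>: "smooth_vf \<eta>" and h: "is_kcovector 2 h"
  defines "G \<equiv> \<lambda>y S. h S + extd a y S"
  shows "extd (int_prod \<eta> G) x {p, q}
     = (\<Sum>k\<in>UNIV. \<eta> x $ k * partial k (\<lambda>y. extd a y {p, q}) x)
       + shuffle_sign {p} {q} * (\<Sum>c\<in>UNIV. partial p (\<lambda>y. \<eta> y $ c) x * skew_entry (G x) c q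
                                         + partial q (\<lambda>y. \<eta> y $ c) x * skew_entry (G x) p c)"
proof -
  define g where "g c r y = skew_entry (G y) c r" for c r y
  have g_fun: "g c r = (\<lambda>y. skew_entry h c r + skew_entry (extd a y) c r)" for c r
    by (simp add: g_def G_def skew_entry_def fun_eq_iff distrib_left)
  have dF: "(\<lambda>y. skew_entry (extd a y) c r) differentiable_on UNIV" for c r
    using extd_differentiable[OF sa] by (simp add: skew_entry_def)
  then have dg: "g c r differentiable_on UNIV" for c r
    unfolding g_fun by simp
  have d\<eta>: "(\<lambda>y. \<eta> y $ c) differentiable_on UNIV" for c
    by (rule smooth_vf_differentiable[OF \<eta>])
  have "is_kform 2 (extd a)"
    using kform_extd[OF a] by (simp add: numeral_2_eq_2)
  then have G2: "is_kform 2 G"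
    using h unfolding G_def is_kform_def is_kcovector_def by simp
  then have g_antisym: "g c r y = - g r c y" for c r y
    unfolding g_def is_kform_iff_kcovector using skew_entry_antisym by blast
  have "is_kform 1 (int_prod \<eta> G)"
    using kform_int_prod[of 1 G] G2 by (simp add: numeral_2_eq_2)
  note extd_int = extd_pair[OF this]
  have int_component: "(\<lambda>y. int_prod \<eta> G y {r}) = (\<lambda>y. \<Sum>c\<in>UNIV. \<eta> y $ c * g c r y)" for r
    by (simp add: int_prod_singleton[OF G2] g_def)
  have curl: "partial p (g c q) x - partial q (g c p) x = shuffle_sign {p} {q} * partial c (\<lambda>y. extd a y {p, q}) x" for c
    using bianchi_identity[OF a sa, of p c q x] dF by (simp add: g_fun skew_entry_def)
  have termwise: "(partial p (\<lambda>y. \<eta> y $ c) x * g c q x + \<eta> x $ c * partial p (g c q) x)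
        - (partial q (\<lambda>y. \<eta> y $ c) x * g c p x + \<eta> x $ c * partial q (g c p) x)
      = (partial p (\<lambda>y. \<eta> y $ c) x * g c q x + partial q (\<lambda>y. \<eta> y $ c) x * g p c x)
        + \<eta> x $ c * (partial p (g c q) x - partial q (g c p) x)" for c
    using g_antisym[of c p x] by (simp add: algebra_simps)
  have "extd (int_prod \<eta> G) x {p, q}
      = shuffle_sign {p} {q} * (\<Sum>c\<in>UNIV. (partial p (\<lambda>y. \<eta> y $ c) x * g c q x + \<eta> x $ c * partial p (g c q) x)
                                         - (partial q (\<lambda>y. \<eta> y $ c) x * g c p x + \<eta> x $ c * partial q (g c p) x))"
    unfolding extd_int int_component using d\<eta> dg by (simp add: sum_subtractf)
  also have "\<dots> = shuffle_sign {p} {q} * (\<Sum>c\<in>UNIV. partial p (\<lambda>y. \<eta> y $ c) x * g c q x + partial q (\<lambda>y. \<eta> y $ c) x * g p c x)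
      + (\<Sum>k\<in>UNIV. \<eta> x $ k * (shuffle_sign {p} {q} * (partial p (g k q) x - partial q (g k p) x)))"
    unfolding termwise sum.distrib distrib_left sum_distrib_left by (simp add: mult.left_commute)
  finally show ?thesis
    by (simp add: curl g_def mult.assoc[symmetric])
qed

section \<open>The variation of the Lagrangian\<close>

lemma Lag_kform:
  assumes "\<And>i. is_kform 1 (b i)" "\<And>i. is_kform 2 (H i)"
  shows "is_kform 4 (Lag M H b \<Phi>)"
proof -
  have d: "is_kform 2 (extd (b i))" for i
    using kform_extd[OF assms(1)] by (simp add: numeral_2_eq_2)
  have w: "is_kform 4 (wedge \<alpha> \<beta>)" if "is_kform 2 \<alpha>" "is_kform 2 \<beta>" for \<alpha> \<beta>
    using kform_wedge[OF that] by simp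
  show ?thesis
    unfolding Lag_def by (intro kform_sum kform_smul kform_add w d assms(2))
qed

lemma Lag_UNIV:
  "Lag M H b \<Phi> x UNIV = (\<Sum>i\<in>UNIV. \<Sum>j\<in>UNIV. \<Phi> i j x *
     (M\<^sup>2 * top_pairing (H i x) (extd (b j) x) + 1/2 * top_pairing (extd (b i) x) (extd (b j) x)))"
  by (simp add: Lag_def sum_fun_apply wedge_UNIV)

lemma deriv_sum_product_at_0:
  fixes p q c0 c1 c2 :: "'i \<Rightarrow> 'j \<Rightarrow> real"
  shows "deriv (\<lambda>e. \<Sum>i\<in>A. \<Sum>j\<in>B. (p i j + e * q i j) * (c0 i j + e * c1 i j + e\<^sup>2 * c2 i j)) 0
        = (\<Sum>i\<in>A. \<Sum>j\<in>B. q i j * c0 i j + p i j * c1 i j)"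
  by (rule DERIV_imp_deriv, (rule DERIV_sum)+) (auto intro!: derivative_eq_intros)

lemma first_variation_UNIV:
  assumes a: "\<And>i J. (\<lambda>y. a i y J) differentiable_on UNIV"
    and \<delta>a: "\<And>i J. (\<lambda>y. \<delta>a i y J) differentiable_on UNIV"
  shows "first_variation M H a \<Psi> \<delta>a \<delta>\<Psi> x UNIV
    = (\<Sum>i\<in>UNIV. \<Sum>j\<in>UNIV.
         \<delta>\<Psi> i j x * (M\<^sup>2 * top_pairing (H i x) (extd (a j) x) + 1/2 * top_pairing (extd (a i) x) (extd (a j) x))
       + \<Psi> i j x * (M\<^sup>2 * top_pairing (H i x) (extd (\<delta>a j) x)
           + 1/2 * (top_pairing (extd (a i) x) (extd (\<delta>a j) x) + top_pairing (extd (\<delta>a i) x) (extd (a j) x))))"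
proof -
  have perturbed: "extd (a i + smul (\<lambda>_. e) (\<delta>a i)) x = (\<lambda>S. extd (a i) x S + e * extd (\<delta>a i) x S)" for i e
    using a \<delta>a by (simp add: extd_add extd_scale fun_eq_iff)
  have "Lag M H (\<lambda>i. a i + smul (\<lambda>_. e) (\<delta>a i)) (\<lambda>i j y. \<Psi> i j y + e * \<delta>\<Psi> i j y) x UNIV
      = (\<Sum>i\<in>UNIV. \<Sum>j\<in>UNIV. (\<Psi> i j x + e * \<delta>\<Psi> i j x) *
          ((M\<^sup>2 * top_pairing (H i x) (extd (a j) x) + 1/2 * top_pairing (extd (a i) x) (extd (a j) x))
           + e * (M\<^sup>2 * top_pairing (H i x) (extd (\<delta>a j) x)
               + 1/2 * (top_pairing (extd (a i) x) (extd (\<delta>a j) x) + top_pairing (extd (\<delta>a i) x) (extd (a j) x)))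
           + e\<^sup>2 * (1/2 * top_pairing (extd (\<delta>a i) x) (extd (\<delta>a j) x))))" for e
    unfolding Lag_UNIV perturbed
    by (intro sum.cong refl) (simp add: top_pairing_bilinear power2_eq_square algebra_simps)
  then show ?thesis
    unfolding first_variation_def by (simp only: deriv_sum_product_at_0)
qed

lemma first_variation_kform:
  assumes "\<And>i. is_kform 1 (a i)" "\<And>i. is_kform 1 (\<delta>a i)" "\<And>i. is_kform 2 (H i)"
  shows "is_kform 4 (first_variation M H a \<Psi> \<delta>a \<delta>\<Psi>)"
proof -
  have "is_kform 4 (Lag M H (\<lambda>i. a i + smul (\<lambda>_. e) (\<delta>a i)) \<Phi>)" for e \<Phi>
    using assms by (intro Lag_kform kform_add kform_smul)
  then show ?thesis
    unfolding is_kform_def first_variation_def by simp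
qed

lemma kform_4_eqI:
  assumes "is_kform 4 \<omega>" "is_kform 4 \<theta>" "\<And>x. \<omega> x UNIV = \<theta> x UNIV"
  shows "\<omega> = \<theta>"
proof (intro ext)
  fix x K
  show "\<omega> x K = \<theta> x K"
    using assms card_eq_4_iff[of K] unfolding is_kform_def by (cases "K = UNIV") auto
qed

lemma sum_regroup_transport:
  fixes \<eta> :: "'k \<Rightarrow> real" and \<Psi> c0 X :: "'i \<Rightarrow> 'j \<Rightarrow> real" and d\<Psi> Z :: "'k \<Rightarrow> 'i \<Rightarrow> 'j \<Rightarrow> real"
  shows "(\<Sum>i\<in>A. \<Sum>j\<in>B. (\<Sum>k\<in>C. \<eta> k * d\<Psi> k i j) * c0 i j + \<Psi> i j * (X i j + (\<Sum>k\<in>C. \<eta> k * Z k i j)))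
       = (\<Sum>i\<in>A. \<Sum>j\<in>B. \<Psi> i j * X i j) + (\<Sum>k\<in>C. \<eta> k * (\<Sum>i\<in>A. \<Sum>j\<in>B. d\<Psi> k i j * c0 i j + \<Psi> i j * Z k i j))"
proof -
  have pointwise: "(\<Sum>k\<in>C. \<eta> k * d\<Psi> k i j) * c0 i j + \<Psi> i j * (X i j + (\<Sum>k\<in>C. \<eta> k * Z k i j))
      = \<Psi> i j * X i j + (\<Sum>k\<in>C. \<eta> k * (d\<Psi> k i j * c0 i j + \<Psi> i j * Z k i j))" for i j
    by (simp add: sum_distrib_left sum_distrib_right sum.distrib algebra_simps)
  have rotate: "(\<Sum>i\<in>A. \<Sum>j\<in>B. \<Sum>k\<in>C. f i j k) = (\<Sum>k\<in>C. \<Sum>i\<in>A. \<Sum>j\<in>B. f i j k)"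
    for f :: "'i \<Rightarrow> 'j \<Rightarrow> 'k \<Rightarrow> real"
    by (subst sum.swap, rule sum.cong[OF refl], rule sum.swap)
  show ?thesis
    unfolding pointwise by (simp add: sum.distrib sum_distrib_left distrib_left rotate)
qed

text \<open>By \<open>top_pairing_derivation\<close>, the summands for \<open>(i, j)\<close> and \<open>(j, i)\<close> on the left add up to the
  trace times the pairing of \<open>G\<^sub>i = M\<^sup>2 h\<^sub>i + F\<^sub>i\<close> with \<open>G\<^sub>j\<close>; after contraction with the symmetric
  \<open>\<Psi>\<close>, the \<open>M\<^sup>4 h\<^sub>i h\<^sub>j\<close> part drops out by orthogonality.\<close>

lemma symmetric_trace_identity:
  fixes \<Psi> :: "'i::finite \<Rightarrow> 'i \<Rightarrow> real" and h F D :: "'i \<Rightarrow> 4 set \<Rightarrow> real" and A :: "4 \<Rightarrow> 4 \<Rightarrow> real"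
  assumes h: "\<And>i. is_kcovector 2 (h i)" and F: "\<And>i. is_kcovector 2 (F i)" and D2: "\<And>i. is_kcovector 2 (D i)"
    and sym: "\<And>i j. \<Psi> i j = \<Psi> j i"
    and orth: "(\<Sum>i\<in>UNIV. \<Sum>j\<in>UNIV. \<Psi> i j * top_pairing (h i) (h j)) = 0"
    and D: "\<And>j p q. p \<noteq> q \<Longrightarrow> D j {p, q} = shuffle_sign {p} {q} *
        (\<Sum>c\<in>UNIV. A p c * skew_entry (\<lambda>S. M\<^sup>2 * h j S + F j S) c q + A q c * skew_entry (\<lambda>S. M\<^sup>2 * h j S + F j S) p c)"
  shows "(\<Sum>i\<in>UNIV. \<Sum>j\<in>UNIV. \<Psi> i j * (M\<^sup>2 * top_pairing (h i) (D j) + 1/2 * (top_pairing (F i) (D j) + top_pairing (D i) (F j))))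
       = (\<Sum>c\<in>UNIV. A c c) * (\<Sum>i\<in>UNIV. \<Sum>j\<in>UNIV. \<Psi> i j * (M\<^sup>2 * top_pairing (h i) (F j) + 1/2 * top_pairing (F i) (F j)))"
proof -
  define G where "G j = (\<lambda>S. M\<^sup>2 * h j S + F j S)" for j
  define trA where "trA = (\<Sum>c\<in>UNIV. A c c)"
  define X where "X i j = M\<^sup>2 * top_pairing (h i) (D j) + 1/2 * (top_pairing (F i) (D j) + top_pairing (D i) (F j))" for i j
  define c0 where "c0 i j = M\<^sup>2 * top_pairing (h i) (F j) + 1/2 * top_pairing (F i) (F j)" for i j
  have G2: "is_kcovector 2 (G j)" for j
    using h F unfolding G_def is_kcovector_def by simp
  have DG: "\<And>p q. p \<noteq> q \<Longrightarrow>
      D j {p, q} = shuffle_sign {p} {q} * (\<Sum>c\<in>UNIV. A p c * skew_entry (G j) c q + A q c * skew_entry (G j) p c)" for j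
    unfolding G_def by (rule D)
  have pair: "X i j + X j i = trA * (M\<^sup>2 * M\<^sup>2 * top_pairing (h i) (h j) + c0 i j + c0 j i)" for i j
  proof -
    have "top_pairing (G i) (D j) + top_pairing (D i) (G j) = trA * top_pairing (G i) (G j)"
      unfolding trA_def by (rule top_pairing_derivation[OF G2 G2 D2 DG DG])
    moreover have "top_pairing (D i) (h j) = top_pairing (h j) (D i)" "top_pairing (F j) (D i) = top_pairing (D i) (F j)"
      "top_pairing (D j) (F i) = top_pairing (F i) (D j)" "top_pairing (F i) (h j) = top_pairing (h j) (F i)"
      "top_pairing (F j) (F i) = top_pairing (F i) (F j)"
      using h F D2 by (simp_all add: top_pairing_sym)
    ultimately show ?thesis
      unfolding X_def c0_def G_def top_pairing_bilinear by algebra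
  qed
  have swap: "(\<Sum>i\<in>UNIV. \<Sum>j\<in>UNIV. \<Psi> i j * f j i) = (\<Sum>i\<in>UNIV. \<Sum>j\<in>UNIV. \<Psi> i j * f i j)" for f :: "'i \<Rightarrow> 'i \<Rightarrow> real"
    by (subst sum.swap) (simp add: sym)
  have "2 * (\<Sum>i\<in>UNIV. \<Sum>j\<in>UNIV. \<Psi> i j * X i j) = (\<Sum>i\<in>UNIV. \<Sum>j\<in>UNIV. \<Psi> i j * (X i j + X j i))"
    using swap[of X] by (simp add: sum.distrib distrib_left)
  also have "\<dots> = trA * (M\<^sup>2 * M\<^sup>2 * (\<Sum>i\<in>UNIV. \<Sum>j\<in>UNIV. \<Psi> i j * top_pairing (h i) (h j))
        + (\<Sum>i\<in>UNIV. \<Sum>j\<in>UNIV. \<Psi> i j * c0 i j) + (\<Sum>i\<in>UNIV. \<Sum>j\<in>UNIV. \<Psi> i j * c0 j i))"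
    by (simp add: pair sum.distrib sum_distrib_left algebra_simps)
  also have "\<dots> = 2 * (trA * (\<Sum>i\<in>UNIV. \<Sum>j\<in>UNIV. \<Psi> i j * c0 i j))"
    using orth swap[of c0] by simp
  finally show ?thesis
    unfolding X_def c0_def trA_def by simp
qed

text \<open>The hypotheses of the theorem, with the constant forms \<open>H\<^sup>i\<close> given by their coefficient
  vectors \<open>h i\<close>; of \<open>H\<^sup>i \<and> H\<^sup>j = 2\<delta>\<^sup>i\<^sup>j vol\<close> only the consequence \<open>h_orthogonal\<close> is used.\<close>

locale lagrangian_variation =
  fixes M :: real and h :: "3 \<Rightarrow> 4 set \<Rightarrow> real" and a :: "3 \<Rightarrow> form"
    and \<Psi> :: "3 \<Rightarrow> 3 \<Rightarrow> real^4 \<Rightarrow> real" and \<eta> :: "real^4 \<Rightarrow> real^4" and \<xi> :: "3 \<Rightarrow> real^4 \<Rightarrow> real"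
  assumes h_two: "\<And>i. is_kcovector 2 (h i)"
    and a_one: "\<And>i. is_kform 1 (a i)" and a_smooth: "\<And>i. smooth_form (a i)"
    and \<Psi>_smooth: "\<And>i j. smooth_fun (\<Psi> i j)" and \<Psi>_sym: "\<And>i j. \<Psi> i j = \<Psi> j i"
    and \<eta>_smooth: "smooth_vf \<eta>" and \<xi>_smooth: "\<And>i. smooth_fun (\<xi> i)"
    and h_orthogonal: "\<And>x. (\<Sum>i\<in>UNIV. \<Sum>j\<in>UNIV. \<Psi> i j x * top_pairing (h i) (h j)) = 0"
begin

lemma extd_a_two: "is_kform 2 (extd (a i))"
  using kform_extd[OF a_one] by (simp add: numeral_2_eq_2)

lemma extd_a_differentiable: "(\<lambda>y. extd (a i) y S) differentiable_on UNIV"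
  by (rule extd_differentiable[OF a_smooth])

lemma a_differentiable: "(\<lambda>y. a i y S) differentiable_on UNIV"
  using a_smooth smooth_fun_differentiable unfolding smooth_form_def by blast

lemma \<eta>_differentiable: "(\<lambda>y. \<eta> y $ k) differentiable_on UNIV"
  by (rule smooth_vf_differentiable[OF \<eta>_smooth])

lemma potential_variation_one:
  "is_kform 1 (extd (zero_form (\<xi> i)) + int_prod \<eta> (smul (\<lambda>_. M\<^sup>2) (\<lambda>_. h i) + extd (a i)))"
proof -
  have "is_kform 2 (smul (\<lambda>_. M\<^sup>2) (\<lambda>_. h i) + extd (a i))"
    using h_two extd_a_two unfolding is_kform_iff_kcovector is_kcovector_def by simp
  then show ?thesis
    using kform_extd[OF kform_zero_form] kform_int_prod[of 1] by (auto intro!: kform_add simp: numeral_2_eq_2)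
qed

lemma potential_variation_differentiable:
  "(\<lambda>y. (extd (zero_form (\<xi> i)) + int_prod \<eta> (smul (\<lambda>_. M\<^sup>2) (\<lambda>_. h i) + extd (a i))) y J) differentiable_on UNIV"
  using extd_differentiable[OF smooth_form_zero_form[OF \<xi>_smooth]]
    int_prod_differentiable[OF \<eta>_differentiable, of "smul (\<lambda>_. M\<^sup>2) (\<lambda>_. h i) + extd (a i)"]
    extd_a_differentiable by simp

lemma field_strength_variation:
  "extd (extd (zero_form (\<xi> j)) + int_prod \<eta> (smul (\<lambda>_. M\<^sup>2) (\<lambda>_. h j) + extd (a j))) x {p, q}
     = (\<Sum>k\<in>UNIV. \<eta> x $ k * partial k (\<lambda>y. extd (a j) y {p, q}) x)
       + shuffle_sign {p} {q} * (\<Sum>c\<in>UNIV.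
            partial p (\<lambda>y. \<eta> y $ c) x * skew_entry (\<lambda>S. M\<^sup>2 * h j S + extd (a j) x S) c q
          + partial q (\<lambda>y. \<eta> y $ c) x * skew_entry (\<lambda>S. M\<^sup>2 * h j S + extd (a j) x S) p c)"
proof -
  have G: "smul (\<lambda>_. M\<^sup>2) (\<lambda>_. h j) + extd (a j) = (\<lambda>y S. M\<^sup>2 * h j S + extd (a j) y S)"
    by (simp add: fun_eq_iff)
  have "is_kcovector 2 (\<lambda>S. M\<^sup>2 * h j S)"
    using h_two unfolding is_kcovector_def by simp
  note pair = extd_int_prod_pair[OF a_one a_smooth \<eta>_smooth this]
  have "extd (extd (zero_form (\<xi> j)) + int_prod \<eta> (smul (\<lambda>_. M\<^sup>2) (\<lambda>_. h j) + extd (a j)))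
      = extd (extd (zero_form (\<xi> j))) + extd (int_prod \<eta> (smul (\<lambda>_. M\<^sup>2) (\<lambda>_. h j) + extd (a j)))"
    using extd_differentiable[OF smooth_form_zero_form[OF \<xi>_smooth]]
      int_prod_differentiable[OF \<eta>_differentiable, of "smul (\<lambda>_. M\<^sup>2) (\<lambda>_. h j) + extd (a j)"]
      extd_a_differentiable
    by (intro extd_add) simp_all
  then show ?thesis
    using pair by (simp add: G extd_extd_zero_form[OF \<xi>_smooth])
qed

lemma Lag_density_differentiable: "(\<lambda>y. Lag M (\<lambda>i _. h i) a \<Psi> y UNIV) differentiable_on UNIV"
  unfolding Lag_UNIV top_pairing_def
  using smooth_fun_differentiable[OF \<Psi>_smooth] extd_a_differentiable by (auto intro!: derivative_intros)

lemma Lag_density_partial: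
  "partial k (\<lambda>y. Lag M (\<lambda>i _. h i) a \<Psi> y UNIV) x
   = (\<Sum>i\<in>UNIV. \<Sum>j\<in>UNIV. partial k (\<Psi> i j) x *
        (M\<^sup>2 * top_pairing (h i) (extd (a j) x) + 1/2 * top_pairing (extd (a i) x) (extd (a j) x))
      + \<Psi> i j x * (M\<^sup>2 * top_pairing (h i) (\<lambda>S. partial k (\<lambda>y. extd (a j) y S) x)
          + 1/2 * (top_pairing (extd (a i) x) (\<lambda>S. partial k (\<lambda>y. extd (a j) y S) x)
                 + top_pairing (\<lambda>S. partial k (\<lambda>y. extd (a i) y S) x) (extd (a j) x))))"
proof -
  have pairing: "partial k (\<lambda>y. top_pairing (u y) (v y)) x
      = top_pairing (\<lambda>S. partial k (\<lambda>y. u y S) x) (v x) + top_pairing (u x) (\<lambda>S. partial k (\<lambda>y. v y S) x)"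
    if "\<And>S. (\<lambda>y. u y S) differentiable_on UNIV" "\<And>S. (\<lambda>y. v y S) differentiable_on UNIV" for u v
    using that unfolding top_pairing_def by (simp add: algebra_simps sum.distrib)
  have d: "(\<lambda>y. top_pairing (u y) (v y)) differentiable_on UNIV"
    if "\<And>S. (\<lambda>y. u y S) differentiable_on UNIV" "\<And>S. (\<lambda>y. v y S) differentiable_on UNIV" for u v
    using that unfolding top_pairing_def by (auto intro!: derivative_intros)
  have "top_pairing (\<lambda>S. 0) w = 0" for w
    by (simp add: top_pairing_def)
  then show ?thesis
    unfolding Lag_UNIV
    using smooth_fun_differentiable[OF \<Psi>_smooth] extd_a_differentiable
    by (simp add: pairing d[of "\<lambda>_. h _" "\<lambda>y. extd (a _) y"] d[of "\<lambda>y. extd (a _) y"])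
      (simp add: algebra_simps)
qed

text \<open>What remains of \<open>\<delta>F\<^sup>j\<close> after the transport term \<open>\<eta>\<^sup>k \<partial>\<^sub>k F\<^sup>j\<close>: the Jacobian of \<open>\<eta>\<close> acting on \<open>G\<^sup>j\<close>.\<close>

lemma rotation_part:
  fixes x :: "real^4"
  defines "D j S \<equiv> extd (extd (zero_form (\<xi> j)) + int_prod \<eta> (smul (\<lambda>_. M\<^sup>2) (\<lambda>_. h j) + extd (a j))) x S
                    - (\<Sum>k\<in>UNIV. \<eta> x $ k * partial k (\<lambda>y. extd (a j) y S) x)"
  shows "is_kcovector 2 (D j)"
    and "D j {p, q} = shuffle_sign {p} {q} * (\<Sum>c\<in>UNIV.
            partial p (\<lambda>y. \<eta> y $ c) x * skew_entry (\<lambda>S. M\<^sup>2 * h j S + extd (a j) x S) c q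
          + partial q (\<lambda>y. \<eta> y $ c) x * skew_entry (\<lambda>S. M\<^sup>2 * h j S + extd (a j) x S) p c)"
proof -
  have "is_kform (Suc 1) (extd (extd (zero_form (\<xi> j)) + int_prod \<eta> (smul (\<lambda>_. M\<^sup>2) (\<lambda>_. h j) + extd (a j))))"
    by (rule kform_extd[OF potential_variation_one])
  moreover have "partial k (\<lambda>y. extd (a j) y S) x = 0" if "card S \<noteq> 2" for k S
    using extd_a_two that unfolding is_kform_def by simp
  ultimately show "is_kcovector 2 (D j)"
    unfolding D_def is_kcovector_def is_kform_def by (simp add: numeral_2_eq_2)
  show "D j {p, q} = shuffle_sign {p} {q} * (\<Sum>c\<in>UNIV.
            partial p (\<lambda>y. \<eta> y $ c) x * skew_entry (\<lambda>S. M\<^sup>2 * h j S + extd (a j) x S) c q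
          + partial q (\<lambda>y. \<eta> y $ c) x * skew_entry (\<lambda>S. M\<^sup>2 * h j S + extd (a j) x S) p c)"
    unfolding D_def field_strength_variation by simp
qed

lemma first_variation_top_degree:
  "first_variation M (\<lambda>i _. h i) a \<Psi>
     (\<lambda>i. extd (zero_form (\<xi> i)) + int_prod \<eta> (smul (\<lambda>_. M\<^sup>2) (\<lambda>_. h i) + extd (a i)))
     (\<lambda>i j x. int_prod \<eta> (extd (zero_form (\<Psi> i j))) x {}) x UNIV
   = extd (int_prod \<eta> (Lag M (\<lambda>i _. h i) a \<Psi>)) x UNIV"
proof -
  define \<delta>a where "\<delta>a i = extd (zero_form (\<xi> i)) + int_prod \<eta> (smul (\<lambda>_. M\<^sup>2) (\<lambda>_. h i) + extd (a i))" for i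
  define F where "F i = extd (a i) x" for i
  define \<delta>F where "\<delta>F i = extd (\<delta>a i) x" for i
  define dF where "dF k i = (\<lambda>S. partial k (\<lambda>y. extd (a i) y S) x)" for k i
  define D where "D j S = \<delta>F j S - (\<Sum>k\<in>UNIV. \<eta> x $ k * dF k j S)" for j S
  define c0 where "c0 i j = M\<^sup>2 * top_pairing (h i) (F j) + 1/2 * top_pairing (F i) (F j)" for i j
  define Z where "Z k i j = M\<^sup>2 * top_pairing (h i) (dF k j) + 1/2 * (top_pairing (F i) (dF k j) + top_pairing (dF k i) (F j))" for k i j
  define X where "X i j = M\<^sup>2 * top_pairing (h i) (D j) + 1/2 * (top_pairing (F i) (D j) + top_pairing (D i) (F j))" for i j
  have D2: "is_kcovector 2 (D j)" for j
    using rotation_part(1)[where x = x] unfolding D_def \<delta>F_def \<delta>a_def dF_def by simp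
  have F2: "is_kcovector 2 (F i)" for i
    using extd_a_two unfolding F_def is_kform_iff_kcovector by blast
  have trace: "(\<Sum>i\<in>UNIV. \<Sum>j\<in>UNIV. \<Psi> i j x * X i j)
      = (\<Sum>c\<in>UNIV. partial c (\<lambda>y. \<eta> y $ c) x) * (\<Sum>i\<in>UNIV. \<Sum>j\<in>UNIV. \<Psi> i j x * c0 i j)"
    unfolding X_def c0_def
    by (intro symmetric_trace_identity[OF h_two F2 D2])
      (simp_all add: \<Psi>_sym h_orthogonal D_def \<delta>F_def \<delta>a_def dF_def F_def rotation_part(2))
  have "\<delta>F j = (\<lambda>S. D j S + (\<Sum>k\<in>UNIV. \<eta> x $ k * dF k j S))" for j
    unfolding D_def by simp
  then have transport: "M\<^sup>2 * top_pairing (h i) (\<delta>F j) + 1/2 * (top_pairing (F i) (\<delta>F j) + top_pairing (\<delta>F i) (F j))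
      = X i j + (\<Sum>k\<in>UNIV. \<eta> x $ k * Z k i j)" for i j
    unfolding X_def Z_def by (simp only: top_pairing_bilinear) (simp add: sum.distrib sum_distrib_left algebra_simps)
  have \<delta>\<Psi>: "int_prod \<eta> (extd (zero_form (\<Psi> i j))) x {} = (\<Sum>k\<in>UNIV. \<eta> x $ k * partial k (\<Psi> i j) x)" for i j
    by (simp add: int_prod_empty extd_zero_form_singleton)
  have "first_variation M (\<lambda>i _. h i) a \<Psi> \<delta>a (\<lambda>i j x. int_prod \<eta> (extd (zero_form (\<Psi> i j))) x {}) x UNIV
      = (\<Sum>i\<in>UNIV. \<Sum>j\<in>UNIV. (\<Sum>k\<in>UNIV. \<eta> x $ k * partial k (\<Psi> i j) x) * c0 i j
                                 + \<Psi> i j x * (X i j + (\<Sum>k\<in>UNIV. \<eta> x $ k * Z k i j)))"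
    unfolding first_variation_UNIV[OF a_differentiable potential_variation_differentiable[folded \<delta>a_def]]
      F_def[symmetric] \<delta>F_def[symmetric] c0_def[symmetric] transport \<delta>\<Psi> ..
  also have "\<dots> = (\<Sum>i\<in>UNIV. \<Sum>j\<in>UNIV. \<Psi> i j x * X i j)
        + (\<Sum>k\<in>UNIV. \<eta> x $ k * (\<Sum>i\<in>UNIV. \<Sum>j\<in>UNIV. partial k (\<Psi> i j) x * c0 i j + \<Psi> i j x * Z k i j))"
    by (rule sum_regroup_transport)
  also have "\<dots> = extd (int_prod \<eta> (Lag M (\<lambda>i _. h i) a \<Psi>)) x UNIV"
    unfolding trace extd_int_prod_UNIV[of \<eta> "Lag M (\<lambda>i _. h i) a \<Psi>", OF \<eta>_differentiable Lag_density_differentiable]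
      Lag_density_partial
    unfolding Lag_UNIV by (simp add: c0_def Z_def F_def dF_def)
  finally show ?thesis unfolding \<delta>a_def .
qed

theorem first_variation_exact:
  "first_variation M (\<lambda>i _. h i) a \<Psi>
     (\<lambda>i. extd (zero_form (\<xi> i)) + int_prod \<eta> (smul (\<lambda>_. M\<^sup>2) (\<lambda>_. h i) + extd (a i)))
     (\<lambda>i j x. int_prod \<eta> (extd (zero_form (\<Psi> i j))) x {})
   = extd (int_prod \<eta> (Lag M (\<lambda>i _. h i) a \<Psi>))"
proof (rule kform_4_eqI)
  have H: "is_kform 2 (\<lambda>_. h i)" for i
    using h_two by (simp add: is_kform_iff_kcovector)
  show "is_kform 4 (first_variation M (\<lambda>i _. h i) a \<Psi>
     (\<lambda>i. extd (zero_form (\<xi> i)) + int_prod \<eta> (smul (\<lambda>_. M\<^sup>2) (\<lambda>_. h i) + extd (a i)))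
     (\<lambda>i j x. int_prod \<eta> (extd (zero_form (\<Psi> i j))) x {}))"
    by (rule first_variation_kform[OF a_one potential_variation_one H])
  show "is_kform 4 (extd (int_prod \<eta> (Lag M (\<lambda>i _. h i) a \<Psi>)))"
    using kform_extd[OF kform_int_prod[of 3]] Lag_kform[OF a_one H] by (simp add: numeral_eq_Suc)
qed (rule first_variation_top_degree)

end

lemma tracefree_orthogonal:
  fixes \<Psi> :: "'i::finite \<Rightarrow> 'i \<Rightarrow> real"
  assumes "(\<Sum>i\<in>UNIV. \<Psi> i i) = 0"
  shows "(\<Sum>i\<in>UNIV. \<Sum>j\<in>UNIV. \<Psi> i j * ((if i = j then c else 0) * v)) = 0"
proof -
  have "(\<Sum>i\<in>UNIV. \<Sum>j\<in>UNIV. \<Psi> i j * ((if i = j then c else 0) * v)) = c * v * (\<Sum>i\<in>UNIV. \<Psi> i i)"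
    by (simp add: if_distrib[of "\<lambda>t. t * v"] if_distrib[of "\<lambda>t. _ * t"] sum_distrib_left mult_ac cong: if_cong)
  then show ?thesis using assms by simp
qed

theorem mainTheorem2:
  fixes H :: "3 \<Rightarrow> form" and vol :: form and M :: real
    and a :: "3 \<Rightarrow> form" and \<Psi> :: "3 \<Rightarrow> 3 \<Rightarrow> real^4 \<Rightarrow> real"
    and \<eta> :: "real^4 \<Rightarrow> real^4" and \<xi> :: "3 \<Rightarrow> real^4 \<Rightarrow> real"
  assumes H_two: "\<And>i. is_kform 2 (H i)" and H_const: "\<And>i. constant_form (H i)"
    and vol_four: "is_kform 4 vol" and vol_const: "constant_form vol"
    and vol_nonzero: "\<And>x. vol x \<noteq> (\<lambda>_. 0)"
    and HH: "\<And>i j. wedge (H i) (H j) = smul (\<lambda>_. if i = j then 2 else 0) vol"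
    and M_pos: "M > 0"
    and a_one: "\<And>i. is_kform 1 (a i)" and a_smooth: "\<And>i. smooth_form (a i)"
    and \<Psi>_smooth: "\<And>i j. smooth_fun (\<Psi> i j)"
    and \<Psi>_sym: "\<And>i j. \<Psi> i j = \<Psi> j i"
    and \<Psi>_tracefree: "\<And>x. (\<Sum>i\<in>UNIV. \<Psi> i i x) = 0"
    and \<eta>_smooth: "smooth_vf \<eta>"
    and \<xi>_smooth: "\<And>i. smooth_fun (\<xi> i)"
  shows "first_variation M H a \<Psi>
           (\<lambda>i. extd (zero_form (\<xi> i))
                  + int_prod \<eta> (smul (\<lambda>_. M\<^sup>2) (H i) + extd (a i)))
           (\<lambda>i j x. int_prod \<eta> (extd (zero_form (\<Psi> i j))) x {})
         = extd (int_prod \<eta> (Lag M H a \<Psi>))"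
proof -
  define h where "h i = H i 0" for i
  have H: "H = (\<lambda>i _. h i)"
    using H_const unfolding constant_form_def h_def by (auto simp: fun_eq_iff)
  have pairing: "top_pairing (h i) (h j) = (if i = j then 2 else 0) * vol x UNIV" for i j x
    using HH[of i j] unfolding H by (metis wedge_UNIV smul_def)
  have "(\<Sum>i\<in>UNIV. \<Sum>j\<in>UNIV. \<Psi> i j x * top_pairing (h i) (h j)) = 0" for x
    unfolding pairing[of _ _ x] by (rule tracefree_orthogonal[of "\<lambda>i j. \<Psi> i j x", OF \<Psi>_tracefree])
  moreover have "is_kcovector 2 (h i)" for i
    using H_two unfolding H is_kform_iff_kcovector by simp
  ultimately interpret lagrangian_variation M h a \<Psi> \<eta> \<xi>
    using assms by unfold_locales auto
  show ?thesis
    unfolding H by (rule first_variation_exact)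
qed

end
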